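(* For every odd prime $p$, writing $m = \frac{p-1}{2}$, $$\sum_{\substack{k_1,k_2,k_3,k_4=0\\ k_1+k_2+k_3+k_4 = p-1}}^{m}\ \prod_{i=1}^4 \binom{m}{k_i}\binom{m+k_i}{k_i} \equiv \sum_{\substack{k_1,k_2,k_3,k_4=0\\ k_1+k_2 = k_3+k_4}}^{m}\ \prod_{i=1}^4 \binom{m}{k_i}\binom{m+k_i}{k_i} \pmod{p^2}.$$
   Context: Both sums run over integers $0 \le k_i \le m$ subject to the indicated linear constraint. *)

theory Defs
  imports "HOL-Number_Theory.Number_Theory"
begin

definition term4 :: "nat \<Rightarrow> (nat \<Rightarrow> nat) \<Rightarrow> int" where
  "term4 m k = (\<Prod>i\<in>{1..4::nat}. int (m choose k i) * int ((m + k i) choose k i))"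

end

theory Submission
  imports Defs
begin

text \<open>Write \<open>p = 2m + 1\<close> and \<open>a(k) = C(m,k) C(m+k,k)\<close>. Modulo \<open>p\<close> we have
\<open>m + i \<equiv> -(m + 1 - i)\<close>, so \<open>C(m+k,k) \<equiv> (-1)^k C(m,k)\<close> and \<open>a(k) \<equiv> (-1)^k C(m,k)^2\<close>,
whence \<open>a(k) \<equiv> (-1)^m a(m - k)\<close>. Consequently the self-convolution
\<open>c(j) = \<Sum>{a(k1) a(k2) | k1 + k2 = j}\<close> satisfies \<open>c(2m - j) \<equiv> c(j)\<close>. Grouping the indices as
\<open>k1 + k2\<close> and \<open>k3 + k4\<close>, the two sums of the theorem are \<open>\<Sum> c(j) c(2m - j)\<close> and
\<open>\<Sum> c(j)^2\<close>, and twice their difference is \<open>-\<Sum> (c(j) - c(2m - j))^2\<close>, a sum of squares of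
multiples of \<open>p\<close>; since \<open>p\<close> is odd, the difference itself is divisible by \<open>p^2\<close>.\<close>

lemma fact_mult_binomial_add_cong:
  assumes "k \<le> m"
  shows "[int (fact k * ((m + k) choose k)) = (-1)^k * int (fact k * (m choose k))] (mod int (2*m+1))"
  using assms
proof (induction k)
  case 0
  then show ?case by simp
next
  case (Suc k)
  have "Suc k * (Suc (m + k) choose Suc k) = Suc (m + k) * ((m + k) choose k)"
    by (rule Suc_times_binomial)
  then have up: "fact (Suc k) * ((m + Suc k) choose Suc k) = Suc (m + k) * (fact k * ((m + k) choose k))"
    by (metis add_Suc_right fact_Suc of_nat_id mult.assoc mult.left_commute)
  have "Suc k * (m choose Suc k) = (m - k) * (m choose k)"
    by (metis binomial_absorption binomial_absorb_comp)
  then have down: "fact (Suc k) * (m choose Suc k) = (m - k) * (fact k * (m choose k))"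
    by (metis fact_Suc of_nat_id mult.assoc mult.left_commute)
  have "[int (Suc (m + k)) = - int (m - k)] (mod int (2*m+1))"
    using Suc.prems by (simp add: cong_iff_dvd_diff of_nat_diff)
  from cong_mult[OF this Suc.IH] Suc.prems show ?case
    by (simp only: up down of_nat_mult) (simp add: algebra_simps)
qed

lemma binomial_add_cong:
  assumes "prime (2*m+1)" and "k \<le> m"
  shows "[int ((m + k) choose k) = (-1)^k * int (m choose k)] (mod int (2*m+1))"
proof -
  have "\<not> (2*m+1) dvd fact k"
    using assms by (simp add: prime_dvd_fact_iff)
  then have "coprime (int (fact k)) (int (2*m+1))"
    using assms(1) by (metis coprime_commute coprime_int_iff prime_imp_coprime)
  with fact_mult_binomial_add_cong[OF assms(2)] show ?thesis
    by (simp add: cong_mult_lcancel mult.left_commute)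
qed

definition apery_coeff :: "nat \<Rightarrow> nat \<Rightarrow> int" where
  "apery_coeff m k = int (m choose k) * int ((m + k) choose k)"

lemma apery_coeff_reflect_cong:
  assumes "prime (2*m+1)" and "k \<le> m"
  shows "[apery_coeff m k = (-1)^m * apery_coeff m (m - k)] (mod int (2*m+1))"
proof -
  have sq: "[apery_coeff m i = (-1)^i * int (m choose i)^2] (mod int (2*m+1))" if "i \<le> m" for i
    using cong_mult[OF cong_refl binomial_add_cong[OF assms(1) that]]
    by (simp add: apery_coeff_def power2_eq_square algebra_simps)
  have "m + (m - k) = k + 2*(m - k)"
    using assms(2) by simp
  then have "(-1::int)^m * (-1)^(m - k) = (-1)^(k + 2*(m - k))"
    by (metis power_add)
  then have sign: "(-1::int)^m * (-1)^(m - k) = (-1)^k"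
    by (simp add: power_add power_mult)
  have "[(-1)^m * apery_coeff m (m - k) = (-1)^m * ((-1)^(m - k) * int (m choose (m - k))^2)] (mod int (2*m+1))"
    using sq[of "m - k"] by (simp add: cong_scalar_left)
  also have "(-1)^m * ((-1)^(m - k) * int (m choose (m - k))^2) = (-1)^k * int (m choose k)^2"
    using sign assms(2) by (simp add: binomial_symmetric[OF assms(2), symmetric] mult.assoc[symmetric])
  finally show ?thesis
    using sq[OF assms(2)] by (metis cong_sym cong_trans)
qed

definition self_conv :: "(nat \<Rightarrow> int) \<Rightarrow> nat \<Rightarrow> nat \<Rightarrow> int" where
  "self_conv g m j = (\<Sum>k1\<in>{0..m}. \<Sum>k2\<in>{0..m}. if k1 + k2 = j then g k1 * g k2 else 0)"

lemma sum_sum_mult_eq_sum_self_conv: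
  "(\<Sum>k1\<in>{0..m}. \<Sum>k2\<in>{0..m}. g k1 * g k2 * F (k1 + k2)) = (\<Sum>j\<in>{0..2*m}. self_conv g m j * F j)"
proof -
  have "(\<Sum>j\<in>{0..2*m}. self_conv g m j * F j) =
        (\<Sum>j\<in>{0..2*m}. \<Sum>k1\<in>{0..m}. \<Sum>k2\<in>{0..m}. if k1 + k2 = j then g k1 * g k2 * F j else 0)"
    unfolding self_conv_def sum_distrib_right by (intro sum.cong refl) auto
  also have "\<dots> = (\<Sum>k1\<in>{0..m}. \<Sum>k2\<in>{0..m}. \<Sum>j\<in>{0..2*m}. if k1 + k2 = j then g k1 * g k2 * F j else 0)"
    by (subst sum.swap) (intro sum.cong refl sum.swap)
  also have "\<dots> = (\<Sum>k1\<in>{0..m}. \<Sum>k2\<in>{0..m}. g k1 * g k2 * F (k1 + k2))"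
    by (intro sum.cong refl) (auto simp: sum.delta)
  finally show ?thesis by simp
qed

lemma sum_atLeast0_reflect: "(\<Sum>i\<in>{0..n::nat}. g i) = (\<Sum>i\<in>{0..n}. g (n - i))"
  using sum.atLeastAtMost_rev[of g 0 n] by simp

lemma self_conv_reflect_cong:
  assumes refl: "\<And>k. k \<le> m \<Longrightarrow> [g k = \<epsilon> * g (m - k)] (mod n)"
    and sign: "\<epsilon> * \<epsilon> = 1"
    and "j \<le> 2*m"
  shows "[self_conv g m (2*m - j) = self_conv g m j] (mod n)"
proof -
  let ?G = "\<lambda>k1 k2. if k1 + k2 = 2*m - j then g k1 * g k2 else 0"
  have "self_conv g m (2*m - j) = (\<Sum>k1\<in>{0..m}. \<Sum>k2\<in>{0..m}. ?G k1 k2)"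
    unfolding self_conv_def ..
  also have "\<dots> = (\<Sum>k1\<in>{0..m}. \<Sum>k2\<in>{0..m}. ?G (m - k1) (m - k2))"
    by (subst sum_atLeast0_reflect) (intro sum.cong refl sum_atLeast0_reflect)
  also have "[\<dots> = self_conv g m j] (mod n)"
    unfolding self_conv_def
  proof (intro cong_sum)
    fix k1 k2 assume k: "k1 \<in> {0..m}" "k2 \<in> {0..m}"
    then have "[g k1 * g k2 = (\<epsilon> * \<epsilon>) * (g (m - k1) * g (m - k2))] (mod n)"
      using cong_mult[OF refl refl] by (simp add: algebra_simps)
    moreover have "(m - k1) + (m - k2) = 2*m - j \<longleftrightarrow> k1 + k2 = j"
      using k \<open>j \<le> 2*m\<close> by auto
    ultimately show "[?G (m - k1) (m - k2) = (if k1 + k2 = j then g k1 * g k2 else 0)] (mod n)"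
      by (simp add: sign cong_sym)
  qed
  finally show ?thesis .
qed

lemma sum_mult_reflect_diff_identity:
  fixes c :: "nat \<Rightarrow> 'a::comm_ring_1"
  shows "2 * ((\<Sum>j\<in>{0..N}. c j * c (N - j)) - (\<Sum>j\<in>{0..N}. c j * c j))
       = - (\<Sum>j\<in>{0..N}. (c j - c (N - j))^2)"
proof -
  have "(\<Sum>j\<in>{0..N}. (c j - c (N - j))^2)
      = (\<Sum>j\<in>{0..N}. c j * c j) + (\<Sum>j\<in>{0..N}. c (N - j) * c (N - j))
        - 2 * (\<Sum>j\<in>{0..N}. c j * c (N - j))"
    by (simp add: power2_eq_square algebra_simps sum_subtractf sum.distrib sum_distrib_left)
  moreover have "(\<Sum>j\<in>{0..N}. c (N - j) * c (N - j)) = (\<Sum>j\<in>{0..N}. c j * c j)"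
    by (rule sum_atLeast0_reflect[symmetric])
  ultimately show ?thesis
    by (simp add: algebra_simps)
qed

lemma sum_mult_reflect_cong_square:
  fixes c :: "nat \<Rightarrow> int" and n :: int
  assumes "odd n" and "\<And>j. j \<le> N \<Longrightarrow> [c (N - j) = c j] (mod n)"
  shows "[(\<Sum>j\<in>{0..N}. c j * c (N - j)) = (\<Sum>j\<in>{0..N}. c j * c j)] (mod n^2)"
proof -
  have "n^2 dvd (\<Sum>j\<in>{0..N}. (c j - c (N - j))^2)"
  proof (rule dvd_sum)
    fix j assume "j \<in> {0..N}"
    then have "n dvd c j - c (N - j)"
      using assms(2) by (simp add: cong_iff_dvd_diff dvd_diff_commute)
    then show "n^2 dvd (c j - c (N - j))^2" by (rule dvd_power_same)
  qed
  then have "n^2 dvd 2 * ((\<Sum>j\<in>{0..N}. c j * c (N - j)) - (\<Sum>j\<in>{0..N}. c j * c j))"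
    by (simp only: sum_mult_reflect_diff_identity dvd_minus_iff)
  moreover have "coprime (n^2) 2"
    using assms(1) by simp
  ultimately show ?thesis
    unfolding cong_iff_dvd_diff using coprime_dvd_mult_right_iff by blast
qed

lemma bij_betw_PiE_4_tuples:
  "bij_betw (\<lambda>k. (k 1, k 2, k 3, k 4))
     {k. k \<in> {1..4::nat} \<rightarrow>\<^sub>E {0..m::nat} \<and> P (k 1) (k 2) (k 3) (k 4)}
     {x \<in> {0..m} \<times> {0..m} \<times> {0..m} \<times> {0..m}. case x of (a, b, c, d) \<Rightarrow> P a b c d}"
proof (rule bij_betw_byWitness[where f' = "\<lambda>(a, b, c, d) i.
    if i = 1 then a else if i = 2 then b else if i = 3 then c else if i = 4 then d else undefined"])
  have four: "{1..4::nat} = {1, 2, 3, 4}" by auto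
  show "\<forall>k\<in>{k. k \<in> {1..4::nat} \<rightarrow>\<^sub>E {0..m} \<and> P (k 1) (k 2) (k 3) (k 4)}.
      (\<lambda>(a, b, c, d) i. if i = 1 then a else if i = 2 then b else if i = 3 then c
                        else if i = 4 then d else undefined) (k 1, k 2, k 3, k 4) = k"
    by (auto simp: four PiE_iff extensional_def fun_eq_iff)
qed (auto simp: PiE_iff extensional_def)

lemma sum_PiE_4_eq_nested_sum:
  fixes f :: "nat \<Rightarrow> nat \<Rightarrow> nat \<Rightarrow> nat \<Rightarrow> 'a::comm_monoid_add"
  shows "(\<Sum>k\<in>{k. k \<in> {1..4::nat} \<rightarrow>\<^sub>E {0..m} \<and> P (k 1) (k 2) (k 3) (k 4)}. f (k 1) (k 2) (k 3) (k 4))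
    = (\<Sum>a\<in>{0..m}. \<Sum>b\<in>{0..m}. \<Sum>c\<in>{0..m}. \<Sum>d\<in>{0..m}. if P a b c d then f a b c d else 0)"
proof -
  let ?A = "{0..m} \<times> {0..m} \<times> {0..m} \<times> {0..m}"
  have "(\<Sum>k\<in>{k. k \<in> {1..4::nat} \<rightarrow>\<^sub>E {0..m} \<and> P (k 1) (k 2) (k 3) (k 4)}. f (k 1) (k 2) (k 3) (k 4))
      = (\<Sum>x\<in>{x \<in> ?A. case x of (a, b, c, d) \<Rightarrow> P a b c d}. case x of (a, b, c, d) \<Rightarrow> f a b c d)"
    using sum.reindex_bij_betw[OF bij_betw_PiE_4_tuples, of "\<lambda>(a, b, c, d). f a b c d"] by simp
  also have "\<dots> = (\<Sum>x\<in>?A. if (case x of (a, b, c, d) \<Rightarrow> P a b c d) then (case x of (a, b, c, d) \<Rightarrow> f a b c d) else 0)"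
    by (rule sum.inter_filter) simp
  also have "\<dots> = (\<Sum>a\<in>{0..m}. \<Sum>b\<in>{0..m}. \<Sum>c\<in>{0..m}. \<Sum>d\<in>{0..m}. if P a b c d then f a b c d else 0)"
    by (simp only: sum.cartesian_product' prod.case)
  finally show ?thesis .
qed

lemma term4_eq_apery_coeff:
  "term4 m k = apery_coeff m (k 1) * apery_coeff m (k 2) * apery_coeff m (k 3) * apery_coeff m (k 4)"
proof -
  have "{1..4::nat} = {1, 2, 3, 4}" by auto
  then show ?thesis
    unfolding term4_def apery_coeff_def by (simp add: algebra_simps)
qed

lemma sum_term4_eq_sum_self_conv:
  "(\<Sum>k\<in>{k. k \<in> {1..4} \<rightarrow>\<^sub>E {0..m} \<and> k 3 + k 4 = h (k 1 + k 2)}. term4 m k)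
    = (\<Sum>j\<in>{0..2*m}. self_conv (apery_coeff m) m j * self_conv (apery_coeff m) m (h j))"
proof -
  let ?a = "apery_coeff m"
  have "(\<Sum>k\<in>{k. k \<in> {1..4} \<rightarrow>\<^sub>E {0..m} \<and> k 3 + k 4 = h (k 1 + k 2)}. term4 m k)
      = (\<Sum>a\<in>{0..m}. \<Sum>b\<in>{0..m}. \<Sum>c\<in>{0..m}. \<Sum>d\<in>{0..m}.
           if c + d = h (a + b) then ?a a * ?a b * ?a c * ?a d else 0)"
    using sum_PiE_4_eq_nested_sum[where P = "\<lambda>a b c d. c + d = h (a + b)"
        and f = "\<lambda>a b c d. ?a a * ?a b * ?a c * ?a d"]
    by (simp add: term4_eq_apery_coeff)
  also have "\<dots> = (\<Sum>a\<in>{0..m}. \<Sum>b\<in>{0..m}. ?a a * ?a b * self_conv ?a m (h (a + b)))"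
    unfolding self_conv_def sum_distrib_left
    by (intro sum.cong refl) (auto simp: algebra_simps)
  also have "\<dots> = (\<Sum>j\<in>{0..2*m}. self_conv ?a m j * self_conv ?a m (h j))"
    by (rule sum_sum_mult_eq_sum_self_conv)
  finally show ?thesis .
qed

lemma sum_term4_total_eq_sum_self_conv:
  "(\<Sum>k\<in>{k. k \<in> {1..4} \<rightarrow>\<^sub>E {0..m} \<and> k 1 + k 2 + k 3 + k 4 = 2*m}. term4 m k)
    = (\<Sum>j\<in>{0..2*m}. self_conv (apery_coeff m) m j * self_conv (apery_coeff m) m (2*m - j))"
proof -
  have "{k. k \<in> {1..4::nat} \<rightarrow>\<^sub>E {0..m} \<and> k 1 + k 2 + k 3 + k 4 = 2*m}
      = {k. k \<in> {1..4} \<rightarrow>\<^sub>E {0..m} \<and> k 3 + k 4 = 2*m - (k 1 + k 2)}"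
  proof (intro Collect_cong conj_cong refl)
    fix k :: "nat \<Rightarrow> nat" assume "k \<in> {1..4} \<rightarrow>\<^sub>E {0..m}"
    then have "k 1 \<le> m" "k 2 \<le> m" by auto
    then show "k 1 + k 2 + k 3 + k 4 = 2*m \<longleftrightarrow> k 3 + k 4 = 2*m - (k 1 + k 2)"
      by auto
  qed
  then show ?thesis
    using sum_term4_eq_sum_self_conv[of m "\<lambda>s. 2*m - s"] by simp
qed

lemma sum_term4_balanced_eq_sum_self_conv:
  "(\<Sum>k\<in>{k. k \<in> {1..4} \<rightarrow>\<^sub>E {0..m} \<and> k 1 + k 2 = k 3 + k 4}. term4 m k)
    = (\<Sum>j\<in>{0..2*m}. self_conv (apery_coeff m) m j * self_conv (apery_coeff m) m j)"
proof -
  have "{k. k \<in> {1..4::nat} \<rightarrow>\<^sub>E {0..m} \<and> k 1 + k 2 = k 3 + k 4}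
      = {k. k \<in> {1..4} \<rightarrow>\<^sub>E {0..m} \<and> k 3 + k 4 = id (k 1 + k 2)}"
    by auto
  then show ?thesis
    using sum_term4_eq_sum_self_conv[of m id] by simp
qed

theorem lemma2p11:
  fixes p :: nat
  assumes "prime p" and "odd p"
  defines "m \<equiv> (p - 1) div 2"
  shows "[(\<Sum>k\<in>{k. k \<in> {1..4} \<rightarrow>\<^sub>E {0..m} \<and> k 1 + k 2 + k 3 + k 4 = p - 1}. term4 m k)
        = (\<Sum>k\<in>{k. k \<in> {1..4} \<rightarrow>\<^sub>E {0..m} \<and> k 1 + k 2 = k 3 + k 4}. term4 m k)]
        (mod (int p)^2)"
proof -
  have p: "p = 2*m + 1"
    using assms(2) unfolding m_def by (auto elim: oddE)
  have apery: "[apery_coeff m k = (-1)^m * apery_coeff m (m - k)] (mod int p)" if "k \<le> m" for k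
    using apery_coeff_reflect_cong[OF _ that] assms(1) p by simp
  have "[self_conv (apery_coeff m) m (2*m - j) = self_conv (apery_coeff m) m j] (mod int p)"
    if "j \<le> 2*m" for j
    using self_conv_reflect_cong[where g = "apery_coeff m", OF apery _ that] by simp
  then have "[(\<Sum>j\<in>{0..2*m}. self_conv (apery_coeff m) m j * self_conv (apery_coeff m) m (2*m - j))
      = (\<Sum>j\<in>{0..2*m}. self_conv (apery_coeff m) m j * self_conv (apery_coeff m) m j)] (mod (int p)^2)"
    using assms(2) by (intro sum_mult_reflect_cong_square) auto
  moreover have "p - 1 = 2*m"
    using p by simp
  ultimately show ?thesis
    by (simp only: sum_term4_total_eq_sum_self_conv sum_term4_balanced_eq_sum_self_conv)
qed

end
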